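(* Let $c\ge1$ and let $\Gamma=(V,E)$ be a $c$-uniform unoriented hypergraph with $N=|V|$ vertices, $M=|E|\ge1$ edges and no isolated vertices; let $\overline{\deg}$ be its average degree (so $c/\overline{\deg}=N/M$) and $\mu_1$ the smallest eigenvalue of its edge Laplacian $L^1$. Then $\mu_1\le c/\overline{\deg}$, and \[ \chi'(\Gamma)\;\ge\;\frac{c-\mu_1}{c/\overline{\deg}-\mu_1}, \] where, if $\mu_1=c/\overline{\deg}$, the right-hand side is interpreted as $1$. Moreover, the inequality is sharp: for integers $p\ge2$ and $1\le k\le c-1$, the $c$-uniform hyperflower with $p$ petals and $k$ central vertices attains equality.
   Context: A hypergraph has finite vertex set $V$ and edge set $E\subseteq\mathcal P(V)$; it is $c$-uniform if $|e|=c$ for all $e$, and unoriented means all incidences have orientation $+1$, so the incidence matrix $\mathcal I$ is the $N\times M$ matrix with $\mathcal I_{v,e}=1$ if $v\in e$ and $0$ otherwise. $\deg v=|\{e: v\in e\}|\ge1$, $D=\mathrm{diag}(\deg v)$, $\overline{\deg}=\frac1N\sum_v\deg v$. The edge Laplacian is the $M\times M$ matrix $L^1=\mathcal I^\top D^{-1}\mathcal I$, with eigenvalues $0\le\mu_1\le\dots\le\mu_M$. A proper strong $k$-edge-coloring is a map $c'\colon E\to\{1,\dots,k\}$ such that $c'(e_1)=c'(e_2)$ with $e_1\ne e_2$ implies $e_1\cap e_2=\varnothing$; $\chi'(\Gamma)$ is the least such $k$. The $c$-uniform hyperflower with $p$ petals and $k$ central vertices is the hypergraph with a set $h$ of $k$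 central vertices and $p$ edges of size $c$, each consisting of $h$ together with $c-k$ further vertices, where distinct edges intersect exactly in $h$. *)

theory Defs
  imports Main "HOL-Library.Disjoint_Sets" Complex_Main
begin

definition hypergraph :: "'a set \<Rightarrow> 'a set set \<Rightarrow> bool" where
  "hypergraph V E \<longleftrightarrow> finite V \<and> E \<subseteq> Pow V"

definition uniform :: "nat \<Rightarrow> 'a set set \<Rightarrow> bool" where
  "uniform c E \<longleftrightarrow> (\<forall>e\<in>E. card e = c)"

definition hdeg :: "'a set set \<Rightarrow> 'a \<Rightarrow> nat" where
  "hdeg E v = card {e\<in>E. v \<in> e}"

definition avg_deg :: "'a set \<Rightarrow> 'a set set \<Rightarrow> real" where
  "avg_deg V E = (\<Sum>v\<in>V. real (hdeg E v)) / real (card V)"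

text \<open>Unoriented incidence matrix (all orientations +1).\<close>
definition incidence :: "'a \<Rightarrow> 'a set \<Rightarrow> real" where
  "incidence v e = (if v \<in> e then 1 else 0)"

definition edge_laplacian :: "'a set \<Rightarrow> 'a set set \<Rightarrow> 'a set \<Rightarrow> 'a set \<Rightarrow> real" where
  "edge_laplacian V E e f = (\<Sum>v\<in>V. incidence v e * incidence v f / real (hdeg E v))"

definition edge_lap_eigenvalue :: "'a set \<Rightarrow> 'a set set \<Rightarrow> real \<Rightarrow> bool" where
  "edge_lap_eigenvalue V E \<mu> \<longleftrightarrow>
     (\<exists>x :: 'a set \<Rightarrow> real. (\<exists>e\<in>E. x e \<noteq> 0) \<and>
        (\<forall>e\<in>E. (\<Sum>f\<in>E. edge_laplacian V E e f * x f) = \<mu> * x e))"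

definition mu1 :: "'a set \<Rightarrow> 'a set set \<Rightarrow> real" where
  "mu1 V E = Min {\<mu>. edge_lap_eigenvalue V E \<mu>}"

definition proper_strong_coloring :: "'a set set \<Rightarrow> nat \<Rightarrow> ('a set \<Rightarrow> nat) \<Rightarrow> bool" where
  "proper_strong_coloring E k col \<longleftrightarrow>
     (\<forall>e\<in>E. col e \<in> {1..k}) \<and>
     (\<forall>e1\<in>E. \<forall>e2\<in>E. e1 \<noteq> e2 \<and> col e1 = col e2 \<longrightarrow> e1 \<inter> e2 = {})"

definition strong_chromatic_index :: "'a set set \<Rightarrow> nat" where
  "strong_chromatic_index E = (LEAST k. \<exists>col. proper_strong_coloring E k col)"

definition hyperflower :: "'a set \<Rightarrow> 'a set set \<Rightarrow> nat \<Rightarrow> nat \<Rightarrow> nat \<Rightarrow> bool" where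
  "hyperflower V E c p k \<longleftrightarrow>
     finite V \<and> V = \<Union>E \<and> card E = p \<and>
     (\<exists>h. card h = k \<and>
        (\<forall>e\<in>E. card e = c \<and> h \<subseteq> e) \<and>
        (\<forall>e1\<in>E. \<forall>e2\<in>E. e1 \<noteq> e2 \<longrightarrow> e1 \<inter> e2 = h))"

definition chi_bound :: "nat \<Rightarrow> 'a set \<Rightarrow> 'a set set \<Rightarrow> real" where
  "chi_bound c V E =
     (if mu1 V E = real c / avg_deg V E then 1
      else (real c - mu1 V E) / (real c / avg_deg V E - mu1 V E))"

end

theory Submission
  imports Defs "HOL-Analysis.Analysis" "Jordan_Normal_Form.Spectral_Radius"
begin

text \<open>The smallest eigenvalue mu1 of the symmetric matrix L^1 is the minimum of its Rayleigh
  quotient. Since the trace of L^1 is N, mu1 \<le> N / M = c / avg_deg. The rows of L^1 sum to c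
  and L^1 vanishes between disjoint edges, so for each colour class C of a strong colouring with k
  colours the indicator of C, shifted to be orthogonal to the constants, gives
  mu1 (|C| - |C|^2/M) \<le> (\<Sum>e\<in>C. L^1 e e) - c |C|^2/M. Summing over the classes and using
  \<Sum>|C|^2 \<ge> M^2/k yields k (N/M - mu1) \<ge> c - mu1. For the hyperflower,
  L^1 = (c - k) I + (k/p) J, so mu1 = c - k and N/M = c - k + k/p, while any two petals meet,
  so all p edges need distinct colours.\<close>

subsection \<open>Rayleigh quotients of symmetric matrices\<close>

definition bform :: "('b \<Rightarrow> 'b \<Rightarrow> real) \<Rightarrow> 'b set \<Rightarrow> ('b \<Rightarrow> real) \<Rightarrow> ('b \<Rightarrow> real) \<Rightarrow> real" where
  "bform S A u v = (\<Sum>e\<in>A. u e * (\<Sum>f\<in>A. S e f * v f))"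

definition sqnorm :: "'b set \<Rightarrow> ('b \<Rightarrow> real) \<Rightarrow> real" where
  "sqnorm A x = (\<Sum>e\<in>A. (x e)\<^sup>2)"

definition eigenvalue_on :: "'b set \<Rightarrow> ('b \<Rightarrow> 'b \<Rightarrow> real) \<Rightarrow> real \<Rightarrow> bool" where
  "eigenvalue_on A S \<mu> \<longleftrightarrow>
     (\<exists>x. (\<exists>e\<in>A. x e \<noteq> 0) \<and> (\<forall>e\<in>A. (\<Sum>f\<in>A. S e f * x f) = \<mu> * x e))"

lemma bform_cong:
  "(\<And>e. e \<in> A \<Longrightarrow> u e = u' e) \<Longrightarrow> (\<And>e. e \<in> A \<Longrightarrow> v e = v' e) \<Longrightarrow>
   bform S A u v = bform S A u' v'"
  unfolding bform_def by (auto intro!: sum.cong)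

lemma bform_scale: "bform S A (\<lambda>e. a * u e) (\<lambda>e. b * v e) = a * b * bform S A u v"
  unfolding bform_def by (simp add: sum_distrib_left algebra_simps)

lemma sqnorm_scale: "sqnorm A (\<lambda>e. a * u e) = a\<^sup>2 * sqnorm A u"
  unfolding sqnorm_def by (simp add: sum_distrib_left power_mult_distrib)

lemma bform_commute:
  assumes "\<forall>e\<in>A. \<forall>f\<in>A. S e f = S f e"
  shows "bform S A u v = bform S A v u"
  unfolding bform_def sum_distrib_left
  by (subst sum.swap) (use assms in \<open>auto intro!: sum.cong simp: algebra_simps\<close>)

lemma bform_add_expand:
  assumes "\<forall>e\<in>A. \<forall>f\<in>A. S e f = S f e"
  shows "bform S A (\<lambda>e. x e + t * w e) (\<lambda>e. x e + t * w e)
           = bform S A x x + 2 * t * bform S A x w + t\<^sup>2 * bform S A w w"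
proof -
  have "bform S A (\<lambda>e. x e + t * w e) (\<lambda>e. x e + t * w e)
          = bform S A x x + t * bform S A x w + t * bform S A w x + t\<^sup>2 * bform S A w w"
    unfolding bform_def
    by (simp add: sum.distrib sum_distrib_left algebra_simps power2_eq_square)
  then show ?thesis using bform_commute[OF assms, of w x] by simp
qed

lemma sqnorm_add_expand:
  "sqnorm A (\<lambda>e. x e + t * w e) = sqnorm A x + 2 * t * (\<Sum>e\<in>A. x e * w e) + t\<^sup>2 * sqnorm A w"
  unfolding sqnorm_def by (simp add: sum.distrib sum_distrib_left algebra_simps power2_eq_square)

lemma sqnorm_nonneg: "sqnorm A x \<ge> 0"
  unfolding sqnorm_def by (simp add: sum_nonneg)

lemma sqnorm_eq_0_iff: "finite A \<Longrightarrow> sqnorm A x = 0 \<longleftrightarrow> (\<forall>e\<in>A. x e = 0)"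
  unfolding sqnorm_def by (simp add: sum_nonneg_eq_0_iff)

lemma sqnorm_ge_square: "finite A \<Longrightarrow> e \<in> A \<Longrightarrow> (x e)\<^sup>2 \<le> sqnorm A x"
  unfolding sqnorm_def by (rule member_le_sum) auto

lemma bform_eigenvector:
  "(\<forall>e\<in>A. (\<Sum>f\<in>A. S e f * x f) = \<mu> * x e) \<Longrightarrow> bform S A x x = \<mu> * sqnorm A x"
  unfolding bform_def sqnorm_def by (simp add: sum_distrib_left power2_eq_square algebra_simps)

lemma bform_indicator:
  assumes "finite A" "C \<subseteq> A" "\<forall>e\<in>C. \<forall>f\<in>C. e \<noteq> f \<longrightarrow> S e f = 0"
  shows "bform S A (indicator C) (indicator C) = (\<Sum>e\<in>C. S e e)"
proof -
  have "bform S A (indicator C) (indicator C) = (\<Sum>e\<in>C. \<Sum>f\<in>C. S e f)"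
    using assms(1,2) by (simp add: bform_def Collect_conj_eq Int_absorb1)
  also have "\<dots> = (\<Sum>e\<in>C. S e e)"
  proof (rule sum.cong[OF refl])
    fix e assume e: "e \<in> C"
    have "finite C" using assms(1,2) finite_subset by blast
    then have "(\<Sum>f\<in>C. S e f) = S e e + (\<Sum>f\<in>C - {e}. S e f)" using e by (rule sum.remove)
    also have "(\<Sum>f\<in>C - {e}. S e f) = 0" using assms(3) e by (intro sum.neutral) auto
    finally show "(\<Sum>f\<in>C. S e f) = S e e" by simp
  qed
  finally show ?thesis .
qed

lemma sum_indicator_subset:
  assumes "finite A" "C \<subseteq> A"
  shows "(\<Sum>e\<in>A. indicator C e :: real) = real (card C)"
proof -
  have "(\<Sum>e\<in>A. indicator C e :: real) = (\<Sum>e\<in>C. 1)"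
    using assms by (intro sum.mono_neutral_cong_right) (auto split: split_indicator)
  then show ?thesis by simp
qed

lemma sqnorm_indicator:
  assumes "finite A" "C \<subseteq> A"
  shows "sqnorm A (indicator C) = real (card C)"
proof -
  have square: "(indicator C e :: real)\<^sup>2 = indicator C e" for e
    by (simp split: split_indicator)
  show ?thesis unfolding sqnorm_def square by (rule sum_indicator_subset[OF assms])
qed

lemma unit_sphere_minimum:
  fixes S :: "'b \<Rightarrow> 'b \<Rightarrow> real"
  assumes fin: "finite A" and ne: "A \<noteq> {}"
  shows "\<exists>x. sqnorm A x = 1 \<and> (\<forall>y. sqnorm A y = 1 \<longrightarrow> bform S A x x \<le> bform S A y y)"
proof -
  define cube where "cube = PiE UNIV (\<lambda>e. if e \<in> A then {-1..1} else {0::real})"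
  define K where "K = cube \<inter> {x. sqnorm A x = 1}"
  define restrict where "restrict y = (\<lambda>e. if e \<in> A then y e else 0)" for y :: "'b \<Rightarrow> real"
  have "compactin (product_topology (\<lambda>_. euclidean) UNIV) cube"
    unfolding cube_def by (subst compactin_PiE) auto
  then have "compact cube" by (simp add: euclidean_product_topology)
  moreover have "closed {x. sqnorm A x = 1}"
    unfolding sqnorm_def
    by (intro closed_Collect_eq continuous_intros continuous_on_product_coordinates)
  ultimately have "compact K" unfolding K_def by (rule compact_Int_closed)
  have restrict_K: "restrict y \<in> K" if y: "sqnorm A y = 1" for y
  proof -
    have "\<bar>y e\<bar> \<le> 1" if "e \<in> A" for e
      using sqnorm_ge_square[OF fin that, of y] y by (simp add: abs_square_le_1)
    then have "restrict y \<in> cube" by (fastforce simp: cube_def restrict_def abs_le_iff)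
    moreover have "sqnorm A (restrict y) = 1" using y by (simp add: restrict_def sqnorm_def)
    ultimately show ?thesis by (simp add: K_def)
  qed
  obtain e0 where "e0 \<in> A" using ne by blast
  then have "sqnorm A (indicator {e0}) = 1" using sqnorm_indicator[OF fin] by simp
  then have "K \<noteq> {}" using restrict_K by blast
  moreover have "continuous_on UNIV (\<lambda>x. bform S A x x)"
    unfolding bform_def by (intro continuous_intros continuous_on_product_coordinates)
  then have "continuous_on K (\<lambda>x. bform S A x x)" by (rule continuous_on_subset) simp
  ultimately obtain x where x: "x \<in> K" and min: "\<forall>z\<in>K. bform S A x x \<le> bform S A z z"
    using continuous_attains_inf[OF \<open>compact K\<close>] by blast
  have "bform S A x x \<le> bform S A y y" if "sqnorm A y = 1" for y
  proof -
    have "bform S A y y = bform S A (restrict y) (restrict y)"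
      by (rule bform_cong) (simp_all add: restrict_def)
    then show ?thesis using min restrict_K[OF that] by simp
  qed
  then show ?thesis using x by (auto simp: K_def)
qed

lemma rayleigh_bound_homogeneous:
  assumes fin: "finite A" and unit: "\<forall>y. sqnorm A y = 1 \<longrightarrow> lam \<le> bform S A y y"
  shows "lam * sqnorm A y \<le> bform S A y y"
proof (cases "sqnorm A y = 0")
  case True
  then have "bform S A y y = bform S A (\<lambda>_. 0) (\<lambda>_. 0)"
    using sqnorm_eq_0_iff[OF fin] by (intro bform_cong) auto
  then show ?thesis using True by (simp add: bform_def)
next
  case False
  define r where "r = sqrt (sqnorm A y)"
  have r: "r > 0" "r\<^sup>2 = sqnorm A y"
    using False sqnorm_nonneg[of A y] by (auto simp: r_def)
  have "sqnorm A (\<lambda>e. (1 / r) * y e) = (1 / r)\<^sup>2 * sqnorm A y" by (rule sqnorm_scale)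
  also have "\<dots> = 1" using r False by (simp add: power_divide)
  finally have "lam \<le> bform S A (\<lambda>e. (1 / r) * y e) (\<lambda>e. (1 / r) * y e)" using unit by blast
  also have "\<dots> = (1 / r) * (1 / r) * bform S A y y" by (rule bform_scale)
  also have "\<dots> = bform S A y y / r\<^sup>2" by (simp add: power2_eq_square)
  finally have "lam \<le> bform S A y y / sqnorm A y" unfolding r(2) .
  moreover have "sqnorm A y > 0" using False sqnorm_nonneg[of A y] by linarith
  ultimately show ?thesis by (simp add: pos_le_divide_eq)
qed

lemma linear_coeff_eq_0_if_quadratic_nonneg:
  fixes a b :: real
  assumes nonneg: "\<forall>t. 0 \<le> a * t + b * t\<^sup>2"
  shows "a = 0"
proof (rule ccontr)
  assume "a \<noteq> 0"
  define t where "t = \<bar>a\<bar> / (2 * (\<bar>b\<bar> + 1))"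
  have t: "t > 0" using \<open>a \<noteq> 0\<close> by (simp add: t_def)
  have "0 \<le> a * t + b * t\<^sup>2" "0 \<le> - a * t + b * t\<^sup>2"
    using nonneg[rule_format, of t] nonneg[rule_format, of "- t"] by simp_all
  then have "\<bar>a\<bar> * t \<le> (b * t) * t" by (simp add: power2_eq_square abs_if algebra_simps)
  then have "\<bar>a\<bar> \<le> b * t" using t by simp
  also have "\<dots> \<le> \<bar>b\<bar> * t" using t by (simp add: mult_right_mono)
  also have "\<dots> < \<bar>a\<bar>"
    using \<open>a \<noteq> 0\<close> by (simp add: t_def field_simps) (auto intro!: add_nonneg_pos)
  finally show False by simp
qed

text \<open>A minimiser of the Rayleigh quotient is an eigenvector: perturbing it in the direction of its
  residual \<open>w = S x - lam x\<close> changes the Rayleigh difference by \<open>2 t |w|\<^sup>2 + O(t\<^sup>2)\<close>.\<close>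
lemma rayleigh_minimizer_eigenvector:
  assumes fin: "finite A" and sym: "\<forall>e\<in>A. \<forall>f\<in>A. S e f = S f e"
    and ray: "\<forall>y. lam * sqnorm A y \<le> bform S A y y" and min: "bform S A x x = lam * sqnorm A x"
  shows "\<forall>e\<in>A. (\<Sum>f\<in>A. S e f * x f) = lam * x e"
proof -
  define w where "w e = (\<Sum>f\<in>A. S e f * x f) - lam * x e" for e
  have residual: "bform S A x w - lam * (\<Sum>e\<in>A. x e * w e) = sqnorm A w"
    unfolding bform_commute[OF sym, of x w]
    by (simp add: bform_def sqnorm_def w_def power2_eq_square algebra_simps
          sum_subtractf[symmetric] sum_distrib_left)
  have "\<forall>t. 0 \<le> (2 * sqnorm A w) * t + (bform S A w w - lam * sqnorm A w) * t\<^sup>2"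
  proof
    fix t
    have "0 \<le> bform S A (\<lambda>e. x e + t * w e) (\<lambda>e. x e + t * w e) - lam * sqnorm A (\<lambda>e. x e + t * w e)"
      using ray by simp
    also have "\<dots> = 2 * t * (bform S A x w - lam * (\<Sum>e\<in>A. x e * w e))
                    + (bform S A w w - lam * sqnorm A w) * t\<^sup>2"
      unfolding bform_add_expand[OF sym] sqnorm_add_expand min by (simp add: algebra_simps)
    finally show "0 \<le> (2 * sqnorm A w) * t + (bform S A w w - lam * sqnorm A w) * t\<^sup>2"
      unfolding residual by (simp add: algebra_simps)
  qed
  then have "sqnorm A w = 0" using linear_coeff_eq_0_if_quadratic_nonneg by fastforce
  then show ?thesis using sqnorm_eq_0_iff[OF fin] by (simp add: w_def)
qed

lemma finite_eigenvalues:
  assumes "finite A"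
  shows "finite {\<mu>. eigenvalue_on A S \<mu>}"
proof -
  obtain xs where xs: "set xs = A" "distinct xs" using finite_distinct_list[OF assms] by blast
  define n where "n = length xs"
  define Sm where "Sm = mat n n (\<lambda>(i, j). S (xs ! i) (xs ! j))"
  have Sm: "Sm \<in> carrier_mat n n" by (simp add: Sm_def)
  have sum_A: "(\<Sum>j<n. g (xs ! j)) = sum g A" for g :: "_ \<Rightarrow> real"
  proof -
    have "(\<Sum>j<n. g (xs ! j)) = sum_list (map g xs)"
      by (simp add: n_def sum_list_sum_nth atLeast0LessThan)
    also have "\<dots> = sum g A" using xs by (simp add: sum_list_distinct_conv_sum_set)
    finally show ?thesis .
  qed
  have "{\<mu>. eigenvalue_on A S \<mu>} \<subseteq> spectrum Sm"
  proof
    fix \<mu> assume "\<mu> \<in> {\<mu>. eigenvalue_on A S \<mu>}"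
    then obtain x e where e: "e \<in> A" "x e \<noteq> 0" and ev: "\<forall>e\<in>A. (\<Sum>f\<in>A. S e f * x f) = \<mu> * x e"
      unfolding eigenvalue_on_def by blast
    define v where "v = vec n (\<lambda>i. x (xs ! i))"
    obtain i where i: "i < n" "xs ! i = e" using e xs by (metis in_set_conv_nth n_def)
    have "v \<noteq> 0\<^sub>v n"
      using i e by (auto simp: v_def dest!: arg_cong[where f="\<lambda>v. v $ i"])
    moreover have "Sm *\<^sub>v v = \<mu> \<cdot>\<^sub>v v"
    proof (rule eq_vecI)
      fix i assume "i < dim_vec (\<mu> \<cdot>\<^sub>v v)"
      then have i: "i < n" by (simp add: v_def)
      then have "(Sm *\<^sub>v v) $ i = (\<Sum>j<n. S (xs ! i) (xs ! j) * x (xs ! j))"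
        by (simp add: Sm_def v_def scalar_prod_def atLeast0LessThan)
      also have "\<dots> = (\<Sum>f\<in>A. S (xs ! i) f * x f)" by (rule sum_A)
      also have "\<dots> = \<mu> * x (xs ! i)" using ev i xs(1) n_def by auto
      finally show "(Sm *\<^sub>v v) $ i = (\<mu> \<cdot>\<^sub>v v) $ i" using i by (simp add: v_def)
    qed (simp add: Sm_def v_def)
    moreover have "v \<in> carrier_vec n" by (simp add: v_def)
    ultimately show "\<mu> \<in> spectrum Sm"
      using Sm unfolding spectrum_def eigenvalue_def eigenvector_def by blast
  qed
  then show ?thesis using card_finite_spectrum(1)[OF Sm] finite_subset by blast
qed

lemma min_eigenvalue_rayleigh:
  assumes fin: "finite A" and ne: "A \<noteq> {}" and sym: "\<forall>e\<in>A. \<forall>f\<in>A. S e f = S f e"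
  shows "eigenvalue_on A S (Min {\<mu>. eigenvalue_on A S \<mu>})"
    and "Min {\<mu>. eigenvalue_on A S \<mu>} * sqnorm A y \<le> bform S A y y"
proof -
  obtain x where x: "sqnorm A x = 1" and min: "\<forall>y. sqnorm A y = 1 \<longrightarrow> bform S A x x \<le> bform S A y y"
    using unit_sphere_minimum[OF fin ne] by blast
  define lam where "lam = bform S A x x"
  have ray: "\<forall>y. lam * sqnorm A y \<le> bform S A y y"
    using rayleigh_bound_homogeneous[OF fin] min by (simp add: lam_def)
  have "\<exists>e\<in>A. x e \<noteq> 0" using x sqnorm_eq_0_iff[OF fin, of x] by auto
  moreover have "\<forall>e\<in>A. (\<Sum>f\<in>A. S e f * x f) = lam * x e"
    using rayleigh_minimizer_eigenvector[OF fin sym ray] x by (simp add: lam_def)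
  ultimately have eig: "eigenvalue_on A S lam" unfolding eigenvalue_on_def by blast
  have "lam \<le> \<mu>" if ev: "eigenvalue_on A S \<mu>" for \<mu>
  proof -
    obtain z where z: "\<exists>e\<in>A. z e \<noteq> 0" "\<forall>e\<in>A. (\<Sum>f\<in>A. S e f * z f) = \<mu> * z e"
      using ev unfolding eigenvalue_on_def by blast
    have "sqnorm A z \<noteq> 0" using z(1) sqnorm_eq_0_iff[OF fin, of z] by blast
    then have pos: "sqnorm A z > 0" using sqnorm_nonneg[of A z] by linarith
    have "lam * sqnorm A z \<le> \<mu> * sqnorm A z"
      using ray[rule_format, of z] bform_eigenvector[OF z(2)] by simp
    then show ?thesis using pos by (rule mult_right_le_imp_le)
  qed
  then have "Min {\<mu>. eigenvalue_on A S \<mu>} = lam"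
    using eig finite_eigenvalues[OF fin] by (intro Min_eqI) auto
  then show "eigenvalue_on A S (Min {\<mu>. eigenvalue_on A S \<mu>})"
    and "Min {\<mu>. eigenvalue_on A S \<mu>} * sqnorm A y \<le> bform S A y y"
    using eig ray by auto
qed

text \<open>When the rows of S sum to r, the constant vector is an eigenvector; the test vector is the
  indicator of C made orthogonal to it.\<close>
lemma rayleigh_shifted_indicator:
  fixes S :: "'b \<Rightarrow> 'b \<Rightarrow> real"
  assumes fin: "finite A" and ne: "A \<noteq> {}" and sym: "\<forall>e\<in>A. \<forall>f\<in>A. S e f = S f e"
    and rows: "\<forall>e\<in>A. (\<Sum>f\<in>A. S e f) = r"
    and C: "C \<subseteq> A" "\<forall>e\<in>C. \<forall>f\<in>C. e \<noteq> f \<longrightarrow> S e f = 0"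
    and ray: "\<forall>y. lam * sqnorm A y \<le> bform S A y y"
  shows "lam * (real (card C) - (real (card C))\<^sup>2 / real (card A))
           \<le> (\<Sum>e\<in>C. S e e) - r * (real (card C))\<^sup>2 / real (card A)"
proof -
  define m where "m = real (card C)"
  define M where "M = real (card A)"
  define t where "t = - m / M"
  have M: "M > 0" using fin ne by (simp add: M_def card_gt_0_iff)
  have "sqnorm A (\<lambda>e. indicator C e + t * 1)
          = sqnorm A (indicator C) + 2 * t * (\<Sum>e\<in>A. indicator C e) + t\<^sup>2 * sqnorm A (\<lambda>_. 1)"
    using sqnorm_add_expand[of A "indicator C" t "\<lambda>_. 1"] by simp
  also have "\<dots> = m + 2 * t * m + t\<^sup>2 * M"
    using sqnorm_indicator[OF fin C(1)] sum_indicator_subset[OF fin C(1)]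
    by (simp add: m_def M_def sqnorm_def)
  also have "\<dots> = m - m\<^sup>2 / M" using M by (simp add: t_def field_simps power2_eq_square)
  finally have norm: "sqnorm A (\<lambda>e. indicator C e + t * 1) = m - m\<^sup>2 / M" .
  have "bform S A (indicator C) (\<lambda>_. 1) = (\<Sum>e\<in>A. indicator C e) * r"
    unfolding bform_def sum_distrib_right using rows by (intro sum.cong) auto
  also have "\<dots> = r * m" using sum_indicator_subset[OF fin C(1)] by (simp add: m_def)
  finally have "bform S A (indicator C) (\<lambda>_. 1) = r * m" .
  moreover have "bform S A (\<lambda>_. 1) (\<lambda>_. 1) = r * M"
    unfolding bform_def using rows by (simp add: M_def)
  ultimately have "bform S A (\<lambda>e. indicator C e + t * 1) (\<lambda>e. indicator C e + t * 1)
               = (\<Sum>e\<in>C. S e e) + 2 * t * (r * m) + t\<^sup>2 * (r * M)"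
    using bform_add_expand[OF sym, of "indicator C" t "\<lambda>_. 1"] bform_indicator[OF fin C] by simp
  also have "\<dots> = (\<Sum>e\<in>C. S e e) - r * m\<^sup>2 / M" using M by (simp add: t_def field_simps power2_eq_square)
  finally have form: "bform S A (\<lambda>e. indicator C e + t * 1) (\<lambda>e. indicator C e + t * 1)
                        = (\<Sum>e\<in>C. S e e) - r * m\<^sup>2 / M" .
  show ?thesis using ray[rule_format, of "\<lambda>e. indicator C e + t * 1"] unfolding norm form m_def M_def .
qed

lemma chromatic_bound_algebra:
  fixes \<mu> N M c k Q :: real
  assumes summed: "\<mu> * (M - Q / M) \<le> N - c * Q / M" and M: "M > 0" and k: "k \<ge> 0"
    and cs: "M\<^sup>2 \<le> Q * k" and \<mu>c: "\<mu> \<le> c" and \<mu>N: "\<mu> < N / M"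
  shows "(c - \<mu>) / (N / M - \<mu>) \<le> k"
proof -
  have "\<mu> * (M - Q / M) * M \<le> (N - c * Q / M) * M"
    using summed M by (simp add: mult_right_mono)
  then have "\<mu> * (M * M - Q) \<le> N * M - c * Q"
    using M by (simp add: algebra_simps)
  then have "(c - \<mu>) * Q \<le> M * (N - \<mu> * M)"
    by (simp add: algebra_simps)
  have "(c - \<mu>) * M\<^sup>2 \<le> (c - \<mu>) * (Q * k)" using cs \<mu>c by (simp add: mult_left_mono)
  also have "\<dots> = k * ((c - \<mu>) * Q)" by (simp add: algebra_simps)
  also have "\<dots> \<le> k * (M * (N - \<mu> * M))" using \<open>(c - \<mu>) * Q \<le> M * (N - \<mu> * M)\<close> k
    by (rule mult_left_mono)
  finally have "M * ((c - \<mu>) * M) \<le> M * (k * (N - \<mu> * M))"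
    by (simp add: power2_eq_square algebra_simps)
  then have "(c - \<mu>) * M \<le> k * (N - \<mu> * M)"
    using M by (simp only: mult_le_cancel_left_pos)
  then have "c - \<mu> \<le> k * (N / M - \<mu>)"
    using M by (simp add: field_simps)
  then show ?thesis using \<mu>N by (simp add: divide_le_eq mult.commute)
qed

subsection \<open>Strong edge colourings\<close>

lemma proper_strong_coloring_card:
  assumes "finite E"
  shows "\<exists>cl. proper_strong_coloring E (card E) cl"
proof -
  obtain f where f: "bij_betw f E {0..<card E}" using ex_bij_betw_finite_nat[OF assms] by blast
  have "\<forall>e\<in>E. Suc (f e) \<in> {1..card E}" using bij_betwE[OF f] by auto
  moreover have "inj_on f E" using f by (rule bij_betw_imp_inj_on)
  ultimately have "proper_strong_coloring E (card E) (\<lambda>e. Suc (f e))"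
    unfolding proper_strong_coloring_def inj_on_def by auto
  then show ?thesis by blast
qed

lemma strong_chromatic_index_coloring:
  "finite E \<Longrightarrow> \<exists>cl. proper_strong_coloring E (strong_chromatic_index E) cl"
  unfolding strong_chromatic_index_def by (rule LeastI_ex) (use proper_strong_coloring_card in blast)

lemma strong_chromatic_index_le_card: "finite E \<Longrightarrow> strong_chromatic_index E \<le> card E"
  unfolding strong_chromatic_index_def by (rule Least_le) (rule proper_strong_coloring_card)

lemma disjoint_colour_class: "proper_strong_coloring E k cl \<Longrightarrow> disjoint {e\<in>E. cl e = i}"
  unfolding proper_strong_coloring_def disjoint_def by blast

lemma sum_colour_classes:
  assumes "finite E" "proper_strong_coloring E k cl"
  shows "(\<Sum>i\<in>{1..k}. \<Sum>e\<in>{e\<in>E. cl e = i}. g e) = (\<Sum>e\<in>E. g e)"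
  using assms by (intro sum.group) (auto simp: proper_strong_coloring_def)

lemma strong_chromatic_index_pairwise_intersecting:
  assumes fin: "finite E" and meet: "\<forall>e\<in>E. \<forall>f\<in>E. e \<noteq> f \<longrightarrow> e \<inter> f \<noteq> {}"
  shows "strong_chromatic_index E = card E"
proof (rule antisym)
  obtain cl where cl: "proper_strong_coloring E (strong_chromatic_index E) cl"
    using strong_chromatic_index_coloring[OF fin] by blast
  have range: "\<forall>e\<in>E. cl e \<in> {1..strong_chromatic_index E}"
    and disj: "\<forall>e\<in>E. \<forall>f\<in>E. e \<noteq> f \<and> cl e = cl f \<longrightarrow> e \<inter> f = {}"
    using cl unfolding proper_strong_coloring_def by (rule conjunct1, rule conjunct2)
  have "inj_on cl E"
  proof (rule inj_onI)
    fix e f assume ef: "e \<in> E" "f \<in> E" "cl e = cl f"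
    show "e = f"
    proof (rule ccontr)
      assume "e \<noteq> f"
      then have "e \<inter> f = {}" and "e \<inter> f \<noteq> {}" using disj meet ef by auto
      then show False by simp
    qed
  qed
  moreover have "cl ` E \<subseteq> {1..strong_chromatic_index E}" using range by blast
  ultimately have "card E \<le> card {1..strong_chromatic_index E}" by (intro card_inj_on_le) auto
  then show "card E \<le> strong_chromatic_index E" by simp
qed (rule strong_chromatic_index_le_card[OF fin])

subsection \<open>The edge Laplacian\<close>

lemma edge_lap_eigenvalue_eq: "edge_lap_eigenvalue V E = eigenvalue_on E (edge_laplacian V E)"
  unfolding edge_lap_eigenvalue_def eigenvalue_on_def by (intro ext) simp

lemma mu1_eq_Min: "mu1 V E = Min {\<mu>. eigenvalue_on E (edge_laplacian V E) \<mu>}"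
  by (simp add: mu1_def edge_lap_eigenvalue_eq)

lemma edge_laplacian_commute: "edge_laplacian V E e f = edge_laplacian V E f e"
  unfolding edge_laplacian_def by (simp add: mult.commute)

lemma edge_laplacian_disjoint: "e \<inter> f = {} \<Longrightarrow> edge_laplacian V E e f = 0"
  unfolding edge_laplacian_def incidence_def by (auto intro!: sum.neutral)

lemma edge_laplacian_eq_sum_inter:
  assumes "finite V" "e \<inter> f \<subseteq> V"
  shows "edge_laplacian V E e f = (\<Sum>v\<in>e \<inter> f. 1 / real (hdeg E v))"
proof -
  have "edge_laplacian V E e f = (\<Sum>v\<in>V. if v \<in> e \<inter> f then 1 / real (hdeg E v) else 0)"
    unfolding edge_laplacian_def incidence_def by (intro sum.cong) auto
  also have "\<dots> = (\<Sum>v\<in>V \<inter> (e \<inter> f). 1 / real (hdeg E v))"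
    using assms(1) by (simp add: sum.If_cases Int_def)
  also have "V \<inter> (e \<inter> f) = e \<inter> f" using assms(2) by blast
  finally show ?thesis .
qed

lemma sum_incidence_edges: "finite E \<Longrightarrow> (\<Sum>f\<in>E. incidence v f) = real (hdeg E v)"
  unfolding incidence_def hdeg_def by (simp add: sum.If_cases Int_def)

locale uniform_hypergraph =
  fixes V :: "'a set" and E :: "'a set set" and c :: nat
  assumes hypergraph: "hypergraph V E"
    and uniform: "uniform c E"
    and no_isolated: "\<forall>v\<in>V. hdeg E v \<ge> 1"
begin

lemma finite_V: "finite V"
  using hypergraph by (simp add: hypergraph_def)

lemma edge_subset: "e \<in> E \<Longrightarrow> e \<subseteq> V"
  using hypergraph by (auto simp: hypergraph_def)

lemma finite_E: "finite E"
  using hypergraph by (meson finite_Pow_iff finite_subset hypergraph_def)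

lemma card_edge: "e \<in> E \<Longrightarrow> card e = c"
  using uniform by (simp add: uniform_def)

lemma sum_incidence_vertices:
  assumes "e \<in> E"
  shows "(\<Sum>v\<in>V. incidence v e) = real c"
proof -
  have "V \<inter> {v. v \<in> e} = e" using edge_subset[OF assms] by auto
  then show ?thesis using finite_V card_edge[OF assms] by (simp add: incidence_def sum.If_cases)
qed

lemma edge_laplacian_row_sum:
  assumes "e \<in> E"
  shows "(\<Sum>f\<in>E. edge_laplacian V E e f) = real c"
proof -
  have "(\<Sum>f\<in>E. edge_laplacian V E e f)
          = (\<Sum>v\<in>V. incidence v e * (\<Sum>f\<in>E. incidence v f) / real (hdeg E v))"
    unfolding edge_laplacian_def
    by (subst sum.swap) (simp add: sum_distrib_left sum_divide_distrib)
  also have "\<dots> = (\<Sum>v\<in>V. incidence v e)"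
  proof (rule sum.cong[OF refl])
    fix v assume "v \<in> V"
    then have "real (hdeg E v) \<noteq> 0" using no_isolated by fastforce
    then show "incidence v e * (\<Sum>f\<in>E. incidence v f) / real (hdeg E v) = incidence v e"
      by (simp add: sum_incidence_edges[OF finite_E])
  qed
  finally show ?thesis using sum_incidence_vertices[OF assms] by simp
qed

lemma trace_edge_laplacian: "(\<Sum>e\<in>E. edge_laplacian V E e e) = real (card V)"
proof -
  have idem: "incidence v e * incidence v e = incidence v e" for v e
    by (simp add: incidence_def)
  have "(\<Sum>e\<in>E. edge_laplacian V E e e) = (\<Sum>v\<in>V. (\<Sum>e\<in>E. incidence v e) / real (hdeg E v))"
    unfolding edge_laplacian_def idem by (subst sum.swap) (simp add: sum_divide_distrib)
  also have "\<dots> = (\<Sum>v\<in>V. 1)"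
  proof (rule sum.cong[OF refl])
    fix v assume "v \<in> V"
    then have "real (hdeg E v) \<noteq> 0" using no_isolated by fastforce
    then show "(\<Sum>e\<in>E. incidence v e) / real (hdeg E v) = 1"
      by (simp add: sum_incidence_edges[OF finite_E])
  qed
  finally show ?thesis by simp
qed

lemma sum_hdeg: "(\<Sum>v\<in>V. real (hdeg E v)) = real c * real (card E)"
proof -
  have "(\<Sum>v\<in>V. real (hdeg E v)) = (\<Sum>f\<in>E. \<Sum>v\<in>V. incidence v f)"
    using sum_incidence_edges[OF finite_E] by (subst sum.swap) simp
  also have "\<dots> = (\<Sum>f\<in>E. real c)" using sum_incidence_vertices by simp
  finally show ?thesis by simp
qed

lemma c_div_avg_deg: "real c / avg_deg V E = real (card V) / real (card E)"
proof (cases "V = {}")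
  case False
  then obtain v where v: "v \<in> V" by blast
  then have "card {e\<in>E. v \<in> e} \<ge> 1" using no_isolated by (simp add: hdeg_def)
  then have "{e\<in>E. v \<in> e} \<noteq> {}" by (metis card.empty not_one_le_zero)
  then obtain e where e: "e \<in> E" "v \<in> e" by blast
  have "finite e" using finite_subset[OF edge_subset[OF e(1)] finite_V] .
  then have "c > 0" using e card_edge[OF e(1)] card_gt_0_iff by blast
  moreover have "card E > 0" using e finite_E card_gt_0_iff by blast
  moreover have "card V > 0" using False finite_V card_gt_0_iff by blast
  ultimately show ?thesis unfolding avg_deg_def sum_hdeg by (simp add: field_simps)
qed (simp add: avg_deg_def)

lemma mu1_le_rayleigh:
  assumes "E \<noteq> {}"
  shows "mu1 V E * sqnorm E y \<le> bform (edge_laplacian V E) E y y"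
  unfolding mu1_eq_Min
  using min_eigenvalue_rayleigh(2)[OF finite_E assms] edge_laplacian_commute by blast

lemma mu1_le_c:
  assumes "E \<noteq> {}"
  shows "mu1 V E \<le> real c"
proof -
  obtain e where "e \<in> E" using assms by blast
  moreover have "\<forall>e\<in>E. (\<Sum>f\<in>E. edge_laplacian V E e f * 1) = real c * 1"
    using edge_laplacian_row_sum by simp
  ultimately have "eigenvalue_on E (edge_laplacian V E) (real c)"
    unfolding eigenvalue_on_def by (intro exI[of _ "\<lambda>_. 1"]) auto
  then show ?thesis unfolding mu1_eq_Min by (intro Min_le finite_eigenvalues[OF finite_E]) simp
qed

lemma mu1_le_card_ratio:
  assumes "E \<noteq> {}"
  shows "mu1 V E \<le> real (card V) / real (card E)"
proof -
  have "mu1 V E \<le> edge_laplacian V E e e" if "e \<in> E" for e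
    using mu1_le_rayleigh[OF assms, of "indicator {e}"] that
      bform_indicator[OF finite_E, of "{e}"] sqnorm_indicator[OF finite_E, of "{e}"] by simp
  then have "(\<Sum>e\<in>E. mu1 V E) \<le> (\<Sum>e\<in>E. edge_laplacian V E e e)" by (rule sum_mono)
  then have "real (card E) * mu1 V E \<le> real (card V)" using trace_edge_laplacian by simp
  moreover have "card E > 0" using assms finite_E by (simp add: card_gt_0_iff)
  ultimately show ?thesis by (simp add: field_simps)
qed

lemma matching_bound:
  assumes "E \<noteq> {}" "C \<subseteq> E" "disjoint C"
  shows "mu1 V E * (real (card C) - (real (card C))\<^sup>2 / real (card E))
           \<le> (\<Sum>e\<in>C. edge_laplacian V E e e) - real c * (real (card C))\<^sup>2 / real (card E)"
proof (rule rayleigh_shifted_indicator[OF finite_E assms(1), where S = "edge_laplacian V E"])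
  show "\<forall>e\<in>E. \<forall>f\<in>E. edge_laplacian V E e f = edge_laplacian V E f e"
    using edge_laplacian_commute by blast
  show "\<forall>e\<in>E. (\<Sum>f\<in>E. edge_laplacian V E e f) = real c"
    using edge_laplacian_row_sum by blast
  show "\<forall>e\<in>C. \<forall>f\<in>C. e \<noteq> f \<longrightarrow> edge_laplacian V E e f = 0"
  proof (intro ballI impI)
    fix e f assume "e \<in> C" "f \<in> C" "e \<noteq> f"
    then have "e \<inter> f = {}" using assms(3) unfolding disjoint_def by blast
    then show "edge_laplacian V E e f = 0" by (rule edge_laplacian_disjoint)
  qed
  show "\<forall>y. mu1 V E * sqnorm E y \<le> bform (edge_laplacian V E) E y y"
    using mu1_le_rayleigh[OF assms(1)] by (rule allI)
qed (rule assms(2))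

lemma colour_classes_rayleigh_bound:
  assumes ne: "E \<noteq> {}" and cl: "proper_strong_coloring E k cl"
  defines "Q \<equiv> (\<Sum>i\<in>{1..k}. (real (card {e\<in>E. cl e = i}))\<^sup>2)" and "M \<equiv> real (card E)"
  shows "mu1 V E * (M - Q / M) \<le> real (card V) - real c * Q / M"
proof -
  define s where "s i = real (card {e\<in>E. cl e = i})" for i
  have Q: "Q = (\<Sum>i\<in>{1..k}. (s i)\<^sup>2)" by (simp add: Q_def s_def)
  have "(\<Sum>i\<in>{1..k}. mu1 V E * (s i - (s i)\<^sup>2 / M))
          = mu1 V E * ((\<Sum>i\<in>{1..k}. s i) - Q / M)"
    by (simp add: Q right_diff_distrib sum_subtractf sum_divide_distrib sum_distrib_left)
  also have "(\<Sum>i\<in>{1..k}. s i) = M"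
    using sum_colour_classes[OF finite_E cl, of "\<lambda>_. 1 :: real"] by (simp add: s_def M_def)
  finally have lhs: "(\<Sum>i\<in>{1..k}. mu1 V E * (s i - (s i)\<^sup>2 / M)) = mu1 V E * (M - Q / M)" .
  have "(\<Sum>i\<in>{1..k}. (\<Sum>e\<in>{e\<in>E. cl e = i}. edge_laplacian V E e e) - real c * (s i)\<^sup>2 / M)
          = (\<Sum>i\<in>{1..k}. \<Sum>e\<in>{e\<in>E. cl e = i}. edge_laplacian V E e e) - real c * Q / M"
    by (simp add: Q sum_subtractf sum_divide_distrib sum_distrib_left)
  also have "\<dots> = real (card V) - real c * Q / M"
    using sum_colour_classes[OF finite_E cl, of "\<lambda>e. edge_laplacian V E e e"] trace_edge_laplacian
    by simp
  finally have rhs: "(\<Sum>i\<in>{1..k}. (\<Sum>e\<in>{e\<in>E. cl e = i}. edge_laplacian V E e e) - real c * (s i)\<^sup>2 / M)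
                       = real (card V) - real c * Q / M" .
  have "mu1 V E * (s i - (s i)\<^sup>2 / M)
          \<le> (\<Sum>e\<in>{e\<in>E. cl e = i}. edge_laplacian V E e e) - real c * (s i)\<^sup>2 / M" for i
    unfolding s_def M_def by (rule matching_bound[OF ne _ disjoint_colour_class[OF cl]]) blast
  then have "(\<Sum>i\<in>{1..k}. mu1 V E * (s i - (s i)\<^sup>2 / M))
          \<le> (\<Sum>i\<in>{1..k}. (\<Sum>e\<in>{e\<in>E. cl e = i}. edge_laplacian V E e e) - real c * (s i)\<^sup>2 / M)"
    by (rule sum_mono)
  then show ?thesis unfolding lhs rhs .
qed

theorem chi_bound_le_strong_chromatic_index:
  assumes ne: "E \<noteq> {}"
  shows "chi_bound c V E \<le> real (strong_chromatic_index E)"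
proof -
  define k where "k = strong_chromatic_index E"
  define M where "M = real (card E)"
  define N where "N = real (card V)"
  define \<mu> where "\<mu> = mu1 V E"
  obtain cl where cl: "proper_strong_coloring E k cl"
    using strong_chromatic_index_coloring[OF finite_E] by (auto simp: k_def)
  define s where "s i = real (card {e\<in>E. cl e = i})" for i
  define Q where "Q = (\<Sum>i\<in>{1..k}. (s i)\<^sup>2)"
  have summed: "\<mu> * (M - Q / M) \<le> N - real c * Q / M"
    using colour_classes_rayleigh_bound[OF ne cl] by (simp add: \<mu>_def N_def M_def Q_def s_def)
  have M: "M > 0" using ne finite_E by (simp add: M_def card_gt_0_iff)
  have k: "real k \<ge> 1" using cl ne by (fastforce simp: proper_strong_coloring_def)
  have "(\<Sum>i\<in>{1..k}. s i) = M"
    using sum_colour_classes[OF finite_E cl, of "\<lambda>_. 1 :: real"] by (simp add: s_def M_def)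
  then have cs: "M\<^sup>2 \<le> Q * real k"
    using sum_squared_le_sum_of_squares[of s "{1..k}"] by (simp add: Q_def)
  have \<mu>c: "\<mu> \<le> real c" using mu1_le_c[OF ne] by (simp add: \<mu>_def)
  have \<mu>N: "\<mu> \<le> N / M" using mu1_le_card_ratio[OF ne] by (simp add: \<mu>_def N_def M_def)
  show ?thesis
  proof (cases "\<mu> = N / M")
    case True
    then have "chi_bound c V E = 1"
      using c_div_avg_deg by (simp add: chi_bound_def \<mu>_def N_def M_def)
    then show ?thesis using k by (simp add: k_def)
  next
    case False
    then have "(real c - \<mu>) / (N / M - \<mu>) \<le> real k"
      using chromatic_bound_algebra[OF summed M _ cs \<mu>c] \<mu>N k by simp
    moreover have "chi_bound c V E = (real c - \<mu>) / (N / M - \<mu>)"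
      using False c_div_avg_deg by (simp add: chi_bound_def \<mu>_def N_def M_def)
    ultimately show ?thesis by (simp add: k_def)
  qed
qed

end

subsection \<open>Hyperflowers\<close>

lemma sunflower_hdeg_kernel:
  assumes "\<forall>e\<in>E. h \<subseteq> e" "v \<in> h"
  shows "hdeg E v = card E"
proof -
  have "{f\<in>E. v \<in> f} = E" using assms by blast
  then show ?thesis by (simp add: hdeg_def)
qed

lemma sunflower_hdeg_petal:
  assumes "\<forall>e1\<in>E. \<forall>e2\<in>E. e1 \<noteq> e2 \<longrightarrow> e1 \<inter> e2 = h" "e \<in> E" "v \<in> e - h"
  shows "hdeg E v = 1"
proof -
  have "{f\<in>E. v \<in> f} = {e}" using assms by blast
  then show ?thesis by (simp add: hdeg_def)
qed

lemma hyperflowerE: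
  assumes "hyperflower V E c p k"
  obtains h where "finite V" "V = \<Union>E" "card E = p" "card h = k" "\<forall>e\<in>E. card e = c \<and> h \<subseteq> e"
    "\<forall>e1\<in>E. \<forall>e2\<in>E. e1 \<noteq> e2 \<longrightarrow> e1 \<inter> e2 = h"
  using assms unfolding hyperflower_def by (elim conjE exE) (rule that)

lemma hyperflower_uniform_hypergraph:
  assumes "hyperflower V E c p k"
  shows "uniform_hypergraph V E c"
proof
  have V: "finite V" "V = \<Union>E" and edges: "\<forall>e\<in>E. card e = c"
    using assms by (auto simp: hyperflower_def)
  then show "hypergraph V E" and "uniform c E"
    by (auto simp: hypergraph_def uniform_def)
  have "finite E" using V by (simp add: finite_UnionD)
  show "\<forall>v\<in>V. 1 \<le> hdeg E v"
  proof
    fix v assume "v \<in> V"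
    then have "{f\<in>E. v \<in> f} \<noteq> {}" using V(2) by blast
    moreover have "finite {f\<in>E. v \<in> f}" using \<open>finite E\<close> by simp
    ultimately show "1 \<le> hdeg E v" by (simp add: hdeg_def Suc_le_eq card_gt_0_iff)
  qed
qed

lemma hyperflower_edge_laplacian:
  assumes hf: "hyperflower V E c p k" and e: "e \<in> E" and f: "f \<in> E"
  shows "edge_laplacian V E e f = (if e = f then real c - real k else 0) + real k / real p"
proof -
  obtain h where V: "finite V" "V = \<Union>E" and p: "card E = p"
    and h: "card h = k" "\<forall>e\<in>E. card e = c \<and> h \<subseteq> e"
    and petals: "\<forall>e1\<in>E. \<forall>e2\<in>E. e1 \<noteq> e2 \<longrightarrow> e1 \<inter> e2 = h"
    using hyperflowerE[OF hf] .
  have eV: "e \<subseteq> V" unfolding V(2) using e by (rule Union_upper)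
  then have "finite e" using V(1) by (rule finite_subset)
  have "\<forall>e\<in>E. h \<subseteq> e" using h(2) by blast
  then have "(\<Sum>v\<in>h. 1 / real (hdeg E v)) = (\<Sum>v\<in>h. 1 / real p)"
    using sunflower_hdeg_kernel p by (intro sum.cong) auto
  then have centre: "(\<Sum>v\<in>h. 1 / real (hdeg E v)) = real k / real p"
    using h(1) by simp
  show ?thesis
  proof (cases "e = f")
    case False
    then have "e \<inter> f = h" using petals e f by blast
    moreover have "e \<inter> f \<subseteq> V" using eV by blast
    ultimately have "edge_laplacian V E e f = (\<Sum>v\<in>h. 1 / real (hdeg E v))"
      using edge_laplacian_eq_sum_inter[OF V(1)] by metis
    then show ?thesis using False centre by simp
  next
    case True
    have he: "h \<subseteq> e" and ce: "card e = c" using h(2) e by blast+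
    have "e \<inter> e \<subseteq> V" using eV by blast
    then have "edge_laplacian V E e e = (\<Sum>v\<in>e. 1 / real (hdeg E v))"
      using edge_laplacian_eq_sum_inter[OF V(1)] by simp
    also have "\<dots> = (\<Sum>v\<in>h. 1 / real (hdeg E v)) + (\<Sum>v\<in>e - h. 1 / real (hdeg E v))"
      using sum.subset_diff[OF he \<open>finite e\<close>] by (simp add: add.commute)
    also have "\<dots> = real k / real p + real (card (e - h))"
      using centre sunflower_hdeg_petal[OF petals e] by simp
    also have "card (e - h) = c - k"
      using card_Diff_subset[OF finite_subset[OF he \<open>finite e\<close>] he] h(1) ce by simp
    finally show ?thesis
      using True card_mono[OF \<open>finite e\<close> he] h(1) ce by (simp add: of_nat_diff)
  qed
qed

lemma identity_plus_const_row:
  fixes S :: "'b \<Rightarrow> 'b \<Rightarrow> real"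
  assumes fin: "finite A" and S: "\<forall>e\<in>A. \<forall>f\<in>A. S e f = (if e = f then a else 0) + b"
    and e: "e \<in> A"
  shows "(\<Sum>f\<in>A. S e f * x f) = a * x e + b * sum x A"
proof -
  have "(\<Sum>f\<in>A. S e f * x f) = (\<Sum>f\<in>A. (if f = e then a * x f else 0) + b * x f)"
    using S e by (intro sum.cong) (auto simp: algebra_simps)
  also have "\<dots> = a * x e + b * sum x A"
    using fin e by (simp add: sum.distrib sum_distrib_left)
  finally show ?thesis .
qed

lemma eigenvalue_identity_plus_const_cases:
  assumes fin: "finite A" and S: "\<forall>e\<in>A. \<forall>f\<in>A. S e f = (if e = f then a else 0) + b"
    and "eigenvalue_on A S \<mu>"
  shows "\<mu> = a \<or> \<mu> = a + real (card A) * b"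
proof -
  obtain x e where e: "e \<in> A" "x e \<noteq> 0" and ev0: "\<forall>e\<in>A. (\<Sum>f\<in>A. S e f * x f) = \<mu> * x e"
    using \<open>eigenvalue_on A S \<mu>\<close> unfolding eigenvalue_on_def by blast
  then have ev: "\<forall>e\<in>A. a * x e + b * sum x A = \<mu> * x e"
    using identity_plus_const_row[OF fin S] by simp
  show ?thesis
  proof (cases "sum x A = 0")
    case True
    have "a * x e + b * sum x A = \<mu> * x e" using ev e(1) by blast
    then have "(a - \<mu>) * x e = 0" using True by (simp add: algebra_simps)
    then show ?thesis using e(2) by simp
  next
    case False
    have "(a + real (card A) * b) * sum x A = (\<Sum>e\<in>A. a * x e + b * sum x A)"
      by (simp add: sum.distrib algebra_simps flip: sum_distrib_left)
    also have "\<dots> = (\<Sum>e\<in>A. \<mu> * x e)" using ev by simp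
    finally have "(a + real (card A) * b) * sum x A = \<mu> * sum x A"
      by (simp add: sum_distrib_left)
    then show ?thesis using False by simp
  qed
qed

lemma eigenvalue_identity_plus_const_diagonal:
  assumes fin: "finite A" and two: "2 \<le> card A"
    and S: "\<forall>e\<in>A. \<forall>f\<in>A. S e f = (if e = f then a else 0) + b"
  shows "eigenvalue_on A S a"
proof -
  have "\<not> (\<forall>e1\<in>A. \<forall>e2\<in>A. e1 = e2)" using two card_le_Suc0_iff_eq[OF fin] by auto
  then obtain e1 e2 where e12: "e1 \<in> A" "e2 \<in> A" "e1 \<noteq> e2" by blast
  define x where "x e = (if e = e1 then 1 else if e = e2 then -1 else 0 :: real)" for e
  have "sum x A = (\<Sum>e\<in>A. (if e = e1 then 1 else 0) + (if e = e2 then -1 else 0 :: real))"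
    using e12(3) by (intro sum.cong) (auto simp: x_def)
  also have "\<dots> = 0" using fin e12 by (simp add: sum.distrib)
  finally have "sum x A = 0" .
  then have "\<forall>e\<in>A. (\<Sum>f\<in>A. S e f * x f) = a * x e"
    using identity_plus_const_row[OF fin S] by simp
  moreover have "x e1 \<noteq> 0" by (simp add: x_def)
  ultimately show ?thesis unfolding eigenvalue_on_def using e12(1) by blast
qed

lemma min_eigenvalue_identity_plus_const:
  assumes fin: "finite A" and two: "2 \<le> card A" and b: "b \<ge> 0"
    and S: "\<forall>e\<in>A. \<forall>f\<in>A. S e f = (if e = f then a else 0) + b"
  shows "Min {\<mu>. eigenvalue_on A S \<mu>} = a"
proof (rule Min_eqI)
  show "finite {\<mu>. eigenvalue_on A S \<mu>}" by (rule finite_eigenvalues[OF fin])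
  show "a \<in> {\<mu>. eigenvalue_on A S \<mu>}" using eigenvalue_identity_plus_const_diagonal[OF fin two S] by simp
  show "a \<le> \<mu>" if "\<mu> \<in> {\<mu>. eigenvalue_on A S \<mu>}" for \<mu>
  proof -
    have "\<mu> = a \<or> \<mu> = a + real (card A) * b"
      using eigenvalue_identity_plus_const_cases[OF fin S] that by simp
    moreover have "0 \<le> real (card A) * b" using b by simp
    ultimately show ?thesis by linarith
  qed
qed

lemma hyperflower_mu1:
  assumes "hyperflower V E c p k" "p \<ge> 2"
  shows "mu1 V E = real c - real k"
proof -
  have "finite E"
    using uniform_hypergraph.finite_E[OF hyperflower_uniform_hypergraph[OF assms(1)]] .
  moreover have "2 \<le> card E" using assms by (simp add: hyperflower_def)
  moreover have "real k / real p \<ge> 0" by simp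
  moreover have "\<forall>e\<in>E. \<forall>f\<in>E. edge_laplacian V E e f
                   = (if e = f then real c - real k else 0) + real k / real p"
    using hyperflower_edge_laplacian[OF assms(1)] by blast
  ultimately show ?thesis unfolding mu1_eq_Min by (rule min_eigenvalue_identity_plus_const)
qed

lemma hyperflower_strong_chromatic_index:
  assumes hf: "hyperflower V E c p k" and k: "k \<ge> 1"
  shows "strong_chromatic_index E = p"
proof -
  obtain h where p: "card E = p" and h: "card h = k"
    and petals: "\<forall>e1\<in>E. \<forall>e2\<in>E. e1 \<noteq> e2 \<longrightarrow> e1 \<inter> e2 = h"
    using hyperflowerE[OF hf] by metis
  have "h \<noteq> {}" using h(1) k by auto
  then have "\<forall>e\<in>E. \<forall>f\<in>E. e \<noteq> f \<longrightarrow> e \<inter> f \<noteq> {}" using petals by blast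
  then show ?thesis
    using strong_chromatic_index_pairwise_intersecting
      uniform_hypergraph.finite_E[OF hyperflower_uniform_hypergraph[OF hf]] p by blast
qed

lemma hyperflower_chi_bound:
  assumes hf: "hyperflower V E c p k" and p: "p \<ge> 2" and k: "k \<ge> 1"
  shows "chi_bound c V E = real p"
proof -
  interpret uniform_hypergraph V E c by (rule hyperflower_uniform_hypergraph[OF hf])
  have cE: "card E = p" using hf by (simp add: hyperflower_def)
  have "(\<Sum>e\<in>E. edge_laplacian V E e e) = (\<Sum>e\<in>E. real c - real k + real k / real p)"
    using hyperflower_edge_laplacian[OF hf] by (intro sum.cong) auto
  then have "real (card V) = real p * (real c - real k + real k / real p)"
    using trace_edge_laplacian cE by simp
  moreover have "real p > 0" using p by simp
  ultimately have "real c / avg_deg V E = real c - real k + real k / real p"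
    using c_div_avg_deg cE by simp
  moreover have "real k / real p > 0" using k p by simp
  ultimately show ?thesis
    using hyperflower_mu1[OF hf p] k p by (simp add: chi_bound_def)
qed

theorem mainTheorem15:
  shows "(\<forall>(c::nat) (V::'a set) (E::'a set set).
            c \<ge> 1 \<and> hypergraph V E \<and> uniform c E \<and> card E \<ge> 1 \<and>
            (\<forall>v\<in>V. hdeg E v \<ge> 1) \<longrightarrow>
              mu1 V E \<le> real c / avg_deg V E \<and>
              real (strong_chromatic_index E) \<ge> chi_bound c V E)
       \<and> (\<forall>(c::nat) (p::nat) (k::nat) (V::'a set) (E::'a set set).
            p \<ge> 2 \<and> 1 \<le> k \<and> k \<le> c - 1 \<and> hyperflower V E c p k \<longrightarrow>
              real (strong_chromatic_index E) = chi_bound c V E)"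
proof (intro conjI allI impI)
  fix c :: nat and V :: "'a set" and E :: "'a set set"
  assume H: "c \<ge> 1 \<and> hypergraph V E \<and> uniform c E \<and> card E \<ge> 1 \<and> (\<forall>v\<in>V. hdeg E v \<ge> 1)"
  then interpret uniform_hypergraph V E c by unfold_locales auto
  have "E \<noteq> {}" using H by auto
  then show "mu1 V E \<le> real c / avg_deg V E" "chi_bound c V E \<le> real (strong_chromatic_index E)"
    using mu1_le_card_ratio c_div_avg_deg chi_bound_le_strong_chromatic_index by simp_all
next
  fix c p k :: nat and V :: "'a set" and E :: "'a set set"
  assume "p \<ge> 2 \<and> 1 \<le> k \<and> k \<le> c - 1 \<and> hyperflower V E c p k"
  then have hf: "hyperflower V E c p k" and p: "p \<ge> 2" and k: "k \<ge> 1" by simp_all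
  show "real (strong_chromatic_index E) = chi_bound c V E"
    by (simp add: hyperflower_strong_chromatic_index[OF hf k] hyperflower_chi_bound[OF hf p k])
qed

end
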